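(* Let $n$ and $k$ be integers with $k\ge4$ and $n\ge3$. Then (i) $\chi_\rho(S^2_{P_k})\ge 4$, and (ii) $\chi_\rho(S^n_{P_k})\ge 5$.
   Context: $P_k$ is the path with vertex set $[k]=\{0,\dots,k-1\}$ and edges $\{i,i+1\}$, $0\le i\le k-2$. For a graph $G$ with vertex set $[k]$ and $n\ge 1$, the generalized Sierpi\'nski graph $S^n_G$ has vertex set $[k]^n$, and $u=u_1\cdots u_n$, $v=v_1\cdots v_n$ are adjacent iff there is $i$ with: $u_j=v_j$ for $j<i$; $u_i\neq v_i$ and $u_iv_i\in E(G)$; and $u_j=v_i$, $v_j=u_i$ for all $j>i$. A packing $c$-coloring of a graph $X$ is a map $f:V(X)\to\{1,\dots,c\}$ such that any two distinct vertices $u,v$ with $f(u)=f(v)=i$ satisfy $d_X(u,v)>i$; the packing chromatic number $\chi_\rho(X)$ is the least such $c$. *)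

theory Defs
  imports Main "HOL-Library.Extended_Nat"
begin

definition path_adj :: "nat \<Rightarrow> nat \<Rightarrow> nat \<Rightarrow> bool" where
  "path_adj k i j \<longleftrightarrow> i < k \<and> j < k \<and> (j = Suc i \<or> i = Suc j)"

text \<open>Generalized Sierpinski graph S^n_G for G on [k]; words u_1...u_n are lists
  indexed 0..n-1.\<close>
definition sierp_verts :: "nat \<Rightarrow> nat \<Rightarrow> nat list set" where
  "sierp_verts k n = {u. length u = n \<and> set u \<subseteq> {0..<k}}"

definition sierp_adj :: "(nat \<Rightarrow> nat \<Rightarrow> bool) \<Rightarrow> nat \<Rightarrow> nat \<Rightarrow> nat list \<Rightarrow> nat list \<Rightarrow> bool" where
  "sierp_adj G k n u v \<longleftrightarrow> u \<in> sierp_verts k n \<and> v \<in> sierp_verts k n \<and>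
     (\<exists>i<n. (\<forall>j<i. u ! j = v ! j) \<and> u ! i \<noteq> v ! i \<and> G (u ! i) (v ! i) \<and>
        (\<forall>j. i < j \<and> j < n \<longrightarrow> u ! j = v ! i \<and> v ! j = u ! i))"

definition walk_of_len :: "'a set \<Rightarrow> ('a \<Rightarrow> 'a \<Rightarrow> bool) \<Rightarrow> 'a \<Rightarrow> 'a \<Rightarrow> nat \<Rightarrow> bool" where
  "walk_of_len V E u v m \<longleftrightarrow> (\<exists>p. length p = Suc m \<and> p ! 0 = u \<and> p ! m = v \<and>
     set p \<subseteq> V \<and> (\<forall>i<m. E (p ! i) (p ! Suc i)))"

definition graph_dist :: "'a set \<Rightarrow> ('a \<Rightarrow> 'a \<Rightarrow> bool) \<Rightarrow> 'a \<Rightarrow> 'a \<Rightarrow> enat" where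
  "graph_dist V E u v = (if \<exists>m. walk_of_len V E u v m
      then enat (LEAST m. walk_of_len V E u v m) else \<infinity>)"

definition packing_coloring :: "'a set \<Rightarrow> ('a \<Rightarrow> 'a \<Rightarrow> bool) \<Rightarrow> nat \<Rightarrow> ('a \<Rightarrow> nat) \<Rightarrow> bool" where
  "packing_coloring V E c f \<longleftrightarrow> (\<forall>u\<in>V. f u \<in> {1..c}) \<and>
     (\<forall>u\<in>V. \<forall>v\<in>V. u \<noteq> v \<and> f u = f v \<longrightarrow> graph_dist V E u v > enat (f u))"

definition packing_chromatic_number :: "'a set \<Rightarrow> ('a \<Rightarrow> 'a \<Rightarrow> bool) \<Rightarrow> nat" where
  "packing_chromatic_number V E = (LEAST c. \<exists>f. packing_coloring V E c f)"

end

(*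
  A word prefix p embeds S^m_{P_4} into S^{|p|+m}_{P_k} (k >= 4) as an injective graph
  homomorphism, which cannot increase distances; so every packing colouring of the large graph
  restricts to one of S^m_{P_4} with the same colours. It therefore suffices that S^2_{P_4} has
  no packing 3-colouring and S^3_{P_4} no packing 4-colouring (take p = 0^(n-3)). This is a
  finite check: already the 9 vertices within distance 3 of 12 in S^2_{P_4}, resp. the 22
  vertices within distance 4 of 122 in S^3_{P_4}, admit no colouring compatible with their
  distances, which are bounded by breadth-first search; an exhaustive backtracking search
  over these vertices, evaluated by the simplifier, confirms this.
*)

theory Submission
  imports Defs
begin

lemma walk_of_len_refl: "u \<in> V \<Longrightarrow> walk_of_len V E u u 0"
  unfolding walk_of_len_def by (intro exI[of _ "[u]"]) auto

lemma walk_of_len_last_in: "walk_of_len V E u v m \<Longrightarrow> v \<in> V"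
  unfolding walk_of_len_def by (metis lessI nth_mem subsetD)

lemma walk_of_len_snoc:
  assumes "walk_of_len V E u v m" "E v w" "w \<in> V"
  shows "walk_of_len V E u w (Suc m)"
proof -
  obtain p where p: "length p = Suc m" "p ! 0 = u" "p ! m = v" "set p \<subseteq> V"
    "\<forall>i<m. E (p ! i) (p ! Suc i)"
    using assms(1) unfolding walk_of_len_def by blast
  have "\<forall>i<Suc m. E ((p @ [w]) ! i) ((p @ [w]) ! Suc i)"
    using p assms(2) by (auto simp: nth_append less_Suc_eq)
  then show ?thesis
    unfolding walk_of_len_def using p assms(3)
    by (intro exI[of _ "p @ [w]"]) (auto simp: nth_append)
qed

lemma walk_of_len_hom:
  assumes "\<forall>x\<in>V. h x \<in> V'" "\<forall>x\<in>V. \<forall>y\<in>V. E x y \<longrightarrow> E' (h x) (h y)"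
    and "walk_of_len V E u v m"
  shows "walk_of_len V' E' (h u) (h v) m"
proof -
  obtain p where p: "length p = Suc m" "p ! 0 = u" "p ! m = v" "set p \<subseteq> V"
    "\<forall>i<m. E (p ! i) (p ! Suc i)"
    using assms(3) unfolding walk_of_len_def by blast
  have "\<forall>i<m. E' (map h p ! i) (map h p ! Suc i)"
    using p assms(2) by (auto simp: subset_iff)
  then show ?thesis
    unfolding walk_of_len_def using p assms(1)
    by (intro exI[of _ "map h p"]) auto
qed

lemma graph_dist_le_walk: "walk_of_len V E u v m \<Longrightarrow> graph_dist V E u v \<le> enat m"
  unfolding graph_dist_def by (auto intro: Least_le)

lemma graph_dist_hom_le:
  assumes "\<forall>x\<in>V. h x \<in> V'" "\<forall>x\<in>V. \<forall>y\<in>V. E x y \<longrightarrow> E' (h x) (h y)"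
  shows "graph_dist V' E' (h u) (h v) \<le> graph_dist V E u v"
proof (cases "\<exists>m. walk_of_len V E u v m")
  case True
  then have "walk_of_len V E u v (LEAST m. walk_of_len V E u v m)"
    by (rule LeastI_ex)
  then have "graph_dist V' E' (h u) (h v) \<le> enat (LEAST m. walk_of_len V E u v m)"
    by (intro graph_dist_le_walk walk_of_len_hom[OF assms])
  then show ?thesis
    using True by (simp add: graph_dist_def)
qed (simp add: graph_dist_def)

lemma packing_coloring_mono:
  "c \<le> c' \<Longrightarrow> packing_coloring V E c f \<Longrightarrow> packing_coloring V E c' f"
  unfolding packing_coloring_def by auto

lemma packing_coloring_hom:
  assumes "\<forall>x\<in>V. h x \<in> V'" "\<forall>x\<in>V. \<forall>y\<in>V. E x y \<longrightarrow> E' (h x) (h y)" "inj_on h V"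
    and "packing_coloring V' E' c f"
  shows "packing_coloring V E c (f \<circ> h)"
  unfolding packing_coloring_def
proof (intro conjI ballI impI)
  fix u assume "u \<in> V"
  then show "(f \<circ> h) u \<in> {1..c}"
    using assms(1,4) unfolding packing_coloring_def by simp
next
  fix u v assume uv: "u \<in> V" "v \<in> V" "u \<noteq> v \<and> (f \<circ> h) u = (f \<circ> h) v"
  then have "h u \<noteq> h v"
    using assms(3) by (auto dest: inj_onD)
  then have "enat ((f \<circ> h) u) < graph_dist V' E' (h u) (h v)"
    using assms(1,4) uv unfolding packing_coloring_def by auto
  also have "\<dots> \<le> graph_dist V E u v"
    by (rule graph_dist_hom_le[OF assms(1,2)])
  finally show "enat ((f \<circ> h) u) < graph_dist V E u v" .
qed

lemma packing_coloring_exists: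
  assumes "finite V"
  shows "\<exists>c f. packing_coloring V E c f"
proof -
  obtain g :: "'a \<Rightarrow> nat" and m where g: "g ` V = {i. i < m}" "inj_on g V"
    using finite_imp_inj_to_nat_seg[OF assms] by blast
  have "packing_coloring V E m (Suc \<circ> g)"
    unfolding packing_coloring_def
  proof (intro conjI ballI impI)
    fix u assume "u \<in> V"
    then have "g u < m"
      using g(1) by blast
    then show "(Suc \<circ> g) u \<in> {1..m}"
      by simp
  next
    fix u v assume "u \<in> V" "v \<in> V" "u \<noteq> v \<and> (Suc \<circ> g) u = (Suc \<circ> g) v"
    then show "enat ((Suc \<circ> g) u) < graph_dist V E u v"
      using g(2) by (auto dest: inj_onD)
  qed
  then show ?thesis by blast
qed

lemma packing_chromatic_number_gt:
  assumes "finite V" and "\<And>f. \<not> packing_coloring V E c f"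
  shows "c < packing_chromatic_number V E"
proof (rule ccontr)
  obtain f where "packing_coloring V E (packing_chromatic_number V E) f"
    using LeastI_ex[OF packing_coloring_exists[OF assms(1)]]
    unfolding packing_chromatic_number_def by blast
  moreover assume "\<not> c < packing_chromatic_number V E"
  ultimately show False
    using assms(2) packing_coloring_mono by (metis not_less)
qed

section \<open>Balls computed by breadth-first search\<close>

definition lists_neighbours :: "'a set \<Rightarrow> ('a \<Rightarrow> 'a \<Rightarrow> bool) \<Rightarrow> ('a \<Rightarrow> 'a list) \<Rightarrow> bool" where
  "lists_neighbours V E N \<longleftrightarrow> (\<forall>u\<in>V. \<forall>v\<in>set (N u). v \<in> V \<and> E u v)"

definition bfs_step :: "('a \<Rightarrow> 'a list) \<Rightarrow> 'a list \<Rightarrow> 'a list" where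
  "bfs_step N B = B @ remdups [y \<leftarrow> concat (map N B). y \<notin> set B]"

text \<open>\<open>balls N r x ! a\<close> is the ball of radius \<open>a\<close> around \<open>x\<close> (for \<open>a \<le> r\<close>), or a subset
  of it if \<open>N\<close> lists only some of the neighbours.\<close>

fun balls :: "('a \<Rightarrow> 'a list) \<Rightarrow> nat \<Rightarrow> 'a \<Rightarrow> 'a list list" where
  "balls N 0 x = [[x]]"
| "balls N (Suc r) x = (let bs = balls N r x in bs @ [bfs_step N (last bs)])"

lemma length_balls [simp]: "length (balls N r x) = Suc r"
  by (induction r) (simp_all add: Let_def)

lemma balls_Suc_nth: "a \<le> r \<Longrightarrow> balls N (Suc r) x ! a = balls N r x ! a"
  by (simp add: Let_def nth_append)

lemma last_balls: "last (balls N r x) = balls N r x ! r"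
  by (cases r) (simp_all add: Let_def nth_append)

lemma distinct_last_balls: "distinct (last (balls N r x))"
  by (induction r) (auto simp: Let_def bfs_step_def)

lemma walk_of_len_if_mem_balls:
  assumes "lists_neighbours V E N" "x \<in> V" "a \<le> r" "y \<in> set (balls N r x ! a)"
  shows "\<exists>m\<le>a. walk_of_len V E x y m"
  using assms(3,4)
proof (induction r arbitrary: a y)
  case 0
  then show ?case
    using walk_of_len_refl[OF assms(2)] by auto
next
  case (Suc r)
  show ?case
  proof (cases "a \<le> r")
    case True
    then show ?thesis
      using Suc.IH Suc.prems(2) balls_Suc_nth by metis
  next
    case False
    then have a: "a = Suc r"
      using Suc.prems(1) by simp
    then have "y \<in> set (bfs_step N (balls N r x ! r))"
      using Suc.prems(2) by (simp add: Let_def nth_append last_balls)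
    then consider "y \<in> set (balls N r x ! r)"
      | w where "w \<in> set (balls N r x ! r)" "y \<in> set (N w)"
      unfolding bfs_step_def by auto
    then show ?thesis
    proof cases
      case 1
      then show ?thesis
        using Suc.IH[of r y] a le_SucI by blast
    next
      case 2
      then obtain m where m: "m \<le> r" "walk_of_len V E x w m"
        using Suc.IH[of r w] by blast
      have "w \<in> V"
        using m(2) by (rule walk_of_len_last_in)
      then have "y \<in> V" "E w y"
        using 2(2) assms(1) unfolding lists_neighbours_def by auto
      then have "walk_of_len V E x y (Suc m)"
        by (intro walk_of_len_snoc[OF m(2)])
      then show ?thesis
        using a m(1) by auto
    qed
  qed
qed

lemma mem_balls_in_vertices:
  assumes "lists_neighbours V E N" "x \<in> V" "a \<le> r" "y \<in> set (balls N r x ! a)"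
  shows "y \<in> V"
  using walk_of_len_if_mem_balls[OF assms] walk_of_len_last_in by auto

lemma graph_dist_le_if_mem_balls:
  assumes "lists_neighbours V E N" "x \<in> V" "a \<le> r" "y \<in> set (balls N r x ! a)"
  shows "graph_dist V E x y \<le> enat a"
proof -
  obtain m where m: "m \<le> a" "walk_of_len V E x y m"
    using walk_of_len_if_mem_balls[OF assms] by blast
  have "graph_dist V E x y \<le> enat m"
    using m(2) by (rule graph_dist_le_walk)
  also have "\<dots> \<le> enat a"
    using m(1) by simp
  finally show ?thesis .
qed

section \<open>Searching for a packing colouring\<close>

text \<open>Vertices are coloured in the order of the list, each together with the list \<open>bs\<close> of its
  balls; \<open>F ! a\<close> collects the vertices that may no longer receive colour \<open>a\<close>. The recursive call
  sits under an \<open>if\<close> rather than a conjunction so that evaluation by the simplifier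
  (\<open>code_simp\<close>) does not unfold pruned branches.\<close>

fun packing_search :: "nat \<Rightarrow> 'a list list \<Rightarrow> ('a \<times> 'a list list) list \<Rightarrow> bool" where
  "packing_search c F [] = True"
| "packing_search c F ((x, bs) # xbs) =
     list_ex (\<lambda>a. if x \<in> set (F ! a) then False
                  else packing_search c (F[a := bs ! a @ F ! a]) xbs) [1..<Suc c]"

lemma packing_search_complete:
  assumes "c < length F"
    and "\<forall>a\<in>{1..c}. \<forall>y\<in>set (F ! a). f y \<noteq> a"
    and "\<forall>(x, bs)\<in>set xbs. f x \<in> {1..c} \<and> (\<forall>y\<in>set (bs ! f x). f y \<noteq> f x)"
  shows "packing_search c F xbs"
  using assms
proof (induction xbs arbitrary: F)
  case Nil
  then show ?case by simp
next
  case (Cons xb xbs)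
  obtain x bs where xb: "xb = (x, bs)"
    by fastforce
  define a where "a = f x"
  define F' where "F' = F[a := bs ! a @ F ! a]"
  have a: "a \<in> {1..c}" and bs: "\<forall>y\<in>set (bs ! a). f y \<noteq> a"
    using Cons.prems(3) unfolding xb a_def by auto
  have "x \<notin> set (F ! a)"
    using Cons.prems(2) a unfolding a_def by blast
  moreover have "packing_search c F' xbs"
  proof (rule Cons.IH)
    show "c < length F'"
      using Cons.prems(1) by (simp add: F'_def)
    show "\<forall>a'\<in>{1..c}. \<forall>y\<in>set (F' ! a'). f y \<noteq> a'"
      using Cons.prems(1,2) a bs by (auto simp: F'_def nth_list_update)
    show "\<forall>(x, bs)\<in>set xbs. f x \<in> {1..c} \<and> (\<forall>y\<in>set (bs ! f x). f y \<noteq> f x)"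
      using Cons.prems(3) by simp
  qed
  ultimately have "if x \<in> set (F ! a) then False else packing_search c F' xbs"
    by simp
  moreover have "a \<in> set [1..<Suc c]"
    using a by auto
  ultimately show ?case
    unfolding xb F'_def packing_search.simps list_ex_iff by (rule bexI)
qed

text \<open>Each entry keeps only the later vertices of its balls: only they can be affected by the
  colour chosen for it.\<close>

fun with_balls :: "('a \<Rightarrow> 'a list) \<Rightarrow> nat \<Rightarrow> 'a list \<Rightarrow> ('a \<times> 'a list list) list" where
  "with_balls N c [] = []"
| "with_balls N c (x # xs) =
     (x, map (filter (\<lambda>y. y \<in> set xs)) (balls N c x)) # with_balls N c xs"

lemma with_balls_entry:
  assumes "(x, bs) \<in> set (with_balls N c xs)" "distinct xs"
  obtains zs where "x \<in> set xs" "set zs \<subseteq> set xs" "x \<notin> set zs"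
    "bs = map (filter (\<lambda>y. y \<in> set zs)) (balls N c x)"
  using assms by (induction xs) auto

lemma not_packing_coloring_if_search_fails:
  assumes N: "lists_neighbours V E N" and x: "x \<in> V"
    and fails: "\<not> packing_search c (replicate (Suc c) []) (with_balls N c (last (balls N r x)))"
  shows "\<not> packing_coloring V E c f"
proof
  assume f: "packing_coloring V E c f"
  let ?xs = "last (balls N r x)"
  have xs: "set ?xs \<subseteq> V"
    using mem_balls_in_vertices[OF N x, of r r] by (auto simp: last_balls)
  have "packing_search c (replicate (Suc c) []) (with_balls N c ?xs)"
  proof (rule packing_search_complete)
    show "\<forall>(z, bs)\<in>set (with_balls N c ?xs). f z \<in> {1..c} \<and> (\<forall>y\<in>set (bs ! f z). f y \<noteq> f z)"
    proof (intro ballI, clarify)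
      fix z bs assume "(z, bs) \<in> set (with_balls N c ?xs)"
      then obtain zs where zs: "z \<in> set ?xs" "set zs \<subseteq> set ?xs" "z \<notin> set zs"
        "bs = map (filter (\<lambda>y. y \<in> set zs)) (balls N c z)"
        by (rule with_balls_entry[OF _ distinct_last_balls])
      have z: "z \<in> V"
        using zs(1) xs by blast
      then have fz: "f z \<in> {1..c}"
        using f unfolding packing_coloring_def by blast
      have "f y \<noteq> f z" if y: "y \<in> set (bs ! f z)" for y
      proof
        assume same: "f y = f z"
        have y': "y \<in> set zs" "y \<in> set (balls N c z ! f z)"
          using y fz zs(4) by auto
        then have "y \<in> V" "y \<noteq> z"
          using zs(2,3) xs by auto
        then have "enat (f z) < graph_dist V E z y"
          using f z same unfolding packing_coloring_def by metis
        moreover have "graph_dist V E z y \<le> enat (f z)"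
          using graph_dist_le_if_mem_balls[OF N z _ y'(2)] fz by simp
        ultimately show False
          by simp
      qed
      then show "f z \<in> {1..c} \<and> (\<forall>y\<in>set (bs ! f z). f y \<noteq> f z)"
        using fz by blast
    qed
  qed (auto simp: nth_replicate)
  with fails show False
    by contradiction
qed

section \<open>Generalized Sierpinski graphs\<close>

lemma finite_sierp_verts: "finite (sierp_verts k n)"
proof -
  have "sierp_verts k n = {u. set u \<subseteq> {0..<k} \<and> length u = n}"
    by (auto simp: sierp_verts_def)
  then show ?thesis
    using finite_lists_length_eq[of "{0..<k}" n] by simp
qed

lemma path_adj_mono: "k \<le> k' \<Longrightarrow> path_adj k a b \<Longrightarrow> path_adj k' a b"
  by (auto simp: path_adj_def)

lemma sierp_adj_mono:
  assumes "k \<le> k'" "\<And>a b. G a b \<Longrightarrow> G' a b" "sierp_adj G k n u v"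
  shows "sierp_adj G' k' n u v"
proof -
  have "u \<in> sierp_verts k' n" "v \<in> sierp_verts k' n"
    using assms(1,3) unfolding sierp_adj_def sierp_verts_def by auto
  moreover obtain i where "i < n" "\<forall>j<i. u ! j = v ! j" "u ! i \<noteq> v ! i" "G (u ! i) (v ! i)"
    "\<forall>j. i < j \<and> j < n \<longrightarrow> u ! j = v ! i \<and> v ! j = u ! i"
    using assms(3) unfolding sierp_adj_def by blast
  ultimately show ?thesis
    unfolding sierp_adj_def using assms(2) by blast
qed

lemma sierp_adj_append:
  assumes p: "set p \<subseteq> {0..<k}" and uv: "sierp_adj G k n u v"
  shows "sierp_adj G k (length p + n) (p @ u) (p @ v)"
proof -
  obtain i where i: "i < n" "\<forall>j<i. u ! j = v ! j" "u ! i \<noteq> v ! i" "G (u ! i) (v ! i)"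
    "\<forall>j. i < j \<and> j < n \<longrightarrow> u ! j = v ! i \<and> v ! j = u ! i"
    using uv unfolding sierp_adj_def by blast
  have "u \<in> sierp_verts k n" "v \<in> sierp_verts k n"
    using uv unfolding sierp_adj_def by auto
  then have verts: "p @ u \<in> sierp_verts k (length p + n)" "p @ v \<in> sierp_verts k (length p + n)"
    using p by (auto simp: sierp_verts_def)
  let ?i = "length p + i"
  have "\<forall>j<?i. (p @ u) ! j = (p @ v) ! j"
    using i(2) by (auto simp: nth_append)
  moreover have "\<forall>j. ?i < j \<and> j < length p + n \<longrightarrow>
      (p @ u) ! j = (p @ v) ! ?i \<and> (p @ v) ! j = (p @ u) ! ?i"
  proof (intro allI impI)
    fix j assume j: "?i < j \<and> j < length p + n"
    then have "i < j - length p \<and> j - length p < n"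
      by auto
    then show "(p @ u) ! j = (p @ v) ! ?i \<and> (p @ v) ! j = (p @ u) ! ?i"
      using i(5) j by (simp add: nth_append)
  qed
  ultimately show ?thesis
    unfolding sierp_adj_def using verts i(1,3,4)
    by (intro conjI exI[of _ ?i]) auto
qed

definition sierp_nbrs :: "(nat \<Rightarrow> nat \<Rightarrow> bool) \<Rightarrow> nat \<Rightarrow> nat list \<Rightarrow> nat list list" where
  "sierp_nbrs G k u =
     [take i u @ b # replicate (length u - Suc i) (u ! i).
        i \<leftarrow> [0..<length u], b \<leftarrow> [0..<k],
        b \<noteq> u ! i \<and> G (u ! i) b \<and> drop (Suc i) u = replicate (length u - Suc i) b]"

lemma lists_neighbours_sierp_nbrs:
  "lists_neighbours (sierp_verts k n) (sierp_adj G k n) (sierp_nbrs G k)"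
  unfolding lists_neighbours_def
proof (intro ballI)
  fix u v assume u: "u \<in> sierp_verts k n" and "v \<in> set (sierp_nbrs G k u)"
  then obtain i b where ib: "i < n" "b < k" "b \<noteq> u ! i" "G (u ! i) b"
    "drop (Suc i) u = replicate (n - Suc i) b" "v = take i u @ b # replicate (n - Suc i) (u ! i)"
    by (auto simp: sierp_nbrs_def sierp_verts_def)
  have lu: "length u = n" and uk: "set u \<subseteq> {0..<k}"
    using u by (auto simp: sierp_verts_def)
  then have "u ! i < k"
    using ib(1) nth_mem by fastforce
  then have v: "v \<in> sierp_verts k n"
    using ib lu uk set_take_subset[of i u] by (auto simp: sierp_verts_def)
  have vi: "v ! i = b" and before: "\<forall>j<i. u ! j = v ! j"
    using ib(1,6) lu by (simp_all add: nth_append)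
  have after: "\<forall>j. i < j \<and> j < n \<longrightarrow> u ! j = v ! i \<and> v ! j = u ! i"
  proof (intro allI impI)
    fix j assume j: "i < j \<and> j < n"
    then have j': "j - Suc i < n - Suc i"
      by arith
    have "u ! j = drop (Suc i) u ! (j - Suc i)"
      using j lu by simp
    then have "u ! j = b"
      using ib(5) j' by simp
    moreover have "v ! j = u ! i"
      using j j' ib(6) lu by (simp add: nth_append)
    ultimately show "u ! j = v ! i \<and> v ! j = u ! i"
      using vi by simp
  qed
  have "sierp_adj G k n u v"
    unfolding sierp_adj_def
  proof (intro conjI exI[of _ i])
    show "u ! i \<noteq> v ! i" "G (u ! i) (v ! i)"
      using ib(3,4) vi by auto
  qed (use u v ib(1) before after in auto)
  then show "v \<in> sierp_verts k n \<and> sierp_adj G k n u v"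
    using v by blast
qed

lemma packing_coloring_sierp_prefix:
  assumes "k \<le> k'" "\<And>a b. G a b \<Longrightarrow> G' a b" "set p \<subseteq> {0..<k'}"
    and "packing_coloring (sierp_verts k' (length p + n)) (sierp_adj G' k' (length p + n)) c f"
  shows "packing_coloring (sierp_verts k n) (sierp_adj G k n) c (\<lambda>u. f (p @ u))"
proof -
  have "packing_coloring (sierp_verts k n) (sierp_adj G k n) c (f \<circ> (@) p)"
  proof (rule packing_coloring_hom[OF _ _ _ assms(4)])
    show "\<forall>u\<in>sierp_verts k n. p @ u \<in> sierp_verts k' (length p + n)"
      using assms(1,3) by (auto simp: sierp_verts_def)
    show "\<forall>u\<in>sierp_verts k n. \<forall>v\<in>sierp_verts k n. sierp_adj G k n u v \<longrightarrow>
        sierp_adj G' k' (length p + n) (p @ u) (p @ v)"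
      by (intro ballI impI sierp_adj_append[OF assms(3)] sierp_adj_mono[OF assms(1,2)])
    show "inj_on ((@) p) (sierp_verts k n)"
      by (simp add: inj_on_def)
  qed
  then show ?thesis
    by (simp add: comp_def)
qed

lemma no_packing_3_coloring_sierp_path_4_2:
  "\<not> packing_coloring (sierp_verts 4 2) (sierp_adj (path_adj 4) 4 2) 3 f"
proof (rule not_packing_coloring_if_search_fails[OF lists_neighbours_sierp_nbrs,
      where x = "[1, 2]" and r = 3])
  show "[1, 2] \<in> sierp_verts 4 2"
    by (simp add: sierp_verts_def)
  show "\<not> packing_search 3 (replicate (Suc 3) [])
      (with_balls (sierp_nbrs (path_adj 4) 4) 3 (last (balls (sierp_nbrs (path_adj 4) 4) 3 [1, 2])))"
    by code_simp
qed

lemma no_packing_4_coloring_sierp_path_4_3: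
  "\<not> packing_coloring (sierp_verts 4 3) (sierp_adj (path_adj 4) 4 3) 4 f"
proof (rule not_packing_coloring_if_search_fails[OF lists_neighbours_sierp_nbrs,
      where x = "[1, 2, 2]" and r = 4])
  show "[1, 2, 2] \<in> sierp_verts 4 3"
    by (simp add: sierp_verts_def)
  show "\<not> packing_search 4 (replicate (Suc 4) [])
      (with_balls (sierp_nbrs (path_adj 4) 4) 4 (last (balls (sierp_nbrs (path_adj 4) 4) 4 [1, 2, 2])))"
    by code_simp
qed

theorem proposition2:
  fixes n k :: nat
  assumes "k \<ge> 4" and "n \<ge> 3"
  shows "packing_chromatic_number (sierp_verts k 2) (sierp_adj (path_adj k) k 2) \<ge> 4 \<and>
         packing_chromatic_number (sierp_verts k n) (sierp_adj (path_adj k) k n) \<ge> 5"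
proof
  have lift: "packing_coloring (sierp_verts 4 m) (sierp_adj (path_adj 4) 4 m) c (\<lambda>u. f (p @ u))"
    if "set p \<subseteq> {0..<k}" "N = length p + m"
      and "packing_coloring (sierp_verts k N) (sierp_adj (path_adj k) k N) c f"
    for p m N c f
    using packing_coloring_sierp_prefix[OF assms(1) path_adj_mono[OF assms(1)] that(1)] that(2,3)
    by simp
  have "\<not> packing_coloring (sierp_verts k 2) (sierp_adj (path_adj k) k 2) 3 f" for f
    using lift[of "[]" 2 2 3 f] no_packing_3_coloring_sierp_path_4_2 by auto
  then have "3 < packing_chromatic_number (sierp_verts k 2) (sierp_adj (path_adj k) k 2)"
    by (rule packing_chromatic_number_gt[OF finite_sierp_verts])
  then show "packing_chromatic_number (sierp_verts k 2) (sierp_adj (path_adj k) k 2) \<ge> 4"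
    by simp
  let ?p = "replicate (n - 3) (0::nat)"
  have n: "n = length ?p + 3" and p: "set ?p \<subseteq> {0..<k}"
    using assms by auto
  have "\<not> packing_coloring (sierp_verts k n) (sierp_adj (path_adj k) k n) 4 f" for f
    using lift[OF p n, of 4 f] no_packing_4_coloring_sierp_path_4_3 by auto
  then have "4 < packing_chromatic_number (sierp_verts k n) (sierp_adj (path_adj k) k n)"
    by (rule packing_chromatic_number_gt[OF finite_sierp_verts])
  then show "packing_chromatic_number (sierp_verts k n) (sierp_adj (path_adj k) k n) \<ge> 5"
    by simp
qed

end
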